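(* Let $D$ be an open subset of an $n$-dimensional Riemannian manifold, $\{e_1,\dots,e_n\}$ a smooth orthonormal frame on $D$ with dual coframe $\{\theta_i\}$, and $\mathfrak a$ a smooth symmetric Codazzi $(0,2)$-tensor on $D$ with $\mathfrak a(e_i,e_j)=\lambda_i\delta_{ij}$, where $\lambda_1,\dots,\lambda_n$ are pointwise distinct on $D$. Let $X=\sum_{i=1}^n\nabla_{e_i}e_i$, $\Gamma_{ij}^k=\langle\nabla_{e_i}e_j,e_k\rangle$, $\sigma_k=\sigma_k(\lambda_1,\dots,\lambda_n)$ and $P(x)=\prod_{i=1}^n(x-\lambda_i)$. If $\sigma_k$ is constant on $D$ for every $k\neq n$, then (i) $\Gamma_{ii}^k=c_{ik}(\sigma_n)_k$ for all $i\neq k$; (ii) $\langle X,\nabla\sigma_n\rangle=\sum_{k=1}^n v_k(\sigma_n)_k^2$, where $c_{ik}=\dfrac{(-1)^{n+1}}{(\lambda_i-\lambda_k)P'(\lambda_i)}$ for $i\neq k$, $v_k=(-1)^{n+1}\dfrac{P''(\lambda_k)}{2P'(\lambda_k)^2}$, and $d\sigma_n=\sum_k(\sigma_n)_k\theta_k$ (so $\nabla\sigma_n=\sum_k(\sigma_n)_ke_k$).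
   Context: $\mathfrak a$ is Codazzi if $(\nabla_X\mathfrak a)(Y,Z)=(\nabla_Y\mathfrak a)(X,Z)$ for all vector fields $X,Y,Z$. $\nabla$ is the Levi-Civita connection. *)

theory Defs
  imports "HOL-Analysis.Analysis" "HOL-Computational_Algebra.Polynomial"
begin

text \<open>Local model: the open set D of the Riemannian manifold is taken inside a
coordinate chart, i.e. D is an open subset of R^n (type real^'n, n = CARD('n)),
and the Riemannian metric is a smooth field of symmetric positive definite
matrices g.\<close>

fun dder :: "'a::real_normed_vector list \<Rightarrow> ('a \<Rightarrow> 'b::real_normed_vector) \<Rightarrow> 'a \<Rightarrow> 'b" where
  "dder [] f = f"
| "dder (v # vs) f = (\<lambda>p. frechet_derivative (dder vs f) (at p) v)"

definition smooth_on :: "'a::real_normed_vector set \<Rightarrow> ('a \<Rightarrow> 'b::real_normed_vector) \<Rightarrow> bool" where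
  "smooth_on S f \<longleftrightarrow> (\<forall>vs. dder vs f differentiable_on S \<and> continuous_on S (dder vs f))"

definition riemannian_metric :: "(real^'n) set \<Rightarrow> (real^'n \<Rightarrow> real^'n^'n) \<Rightarrow> bool" where
  "riemannian_metric D g \<longleftrightarrow> smooth_on D g \<and>
     (\<forall>p\<in>D. transpose (g p) = g p \<and> (\<forall>v. v \<noteq> 0 \<longrightarrow> v \<bullet> (g p *v v) > 0))"

definition ginner :: "(real^'n \<Rightarrow> real^'n^'n) \<Rightarrow> real^'n \<Rightarrow> real^'n \<Rightarrow> real^'n \<Rightarrow> real" where
  "ginner g p u v = u \<bullet> (g p *v v)"

definition christoffel :: "(real^'n \<Rightarrow> real^'n^'n) \<Rightarrow> real^'n \<Rightarrow> real^'n \<Rightarrow> real^'n \<Rightarrow> real^'n" where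
  "christoffel g p u v =
     (1/2) *\<^sub>R (matrix_inv (g p) *v
       (\<chi> l. v \<bullet> (frechet_derivative g (at p) u *v axis l 1)
            + u \<bullet> (frechet_derivative g (at p) v *v axis l 1)
            - u \<bullet> (frechet_derivative g (at p) (axis l 1) *v v)))"

definition cov :: "(real^'n \<Rightarrow> real^'n^'n) \<Rightarrow> (real^'n \<Rightarrow> real^'n) \<Rightarrow> (real^'n \<Rightarrow> real^'n) \<Rightarrow> real^'n \<Rightarrow> real^'n" where
  "cov g X Y p = frechet_derivative Y (at p) (X p) + christoffel g p (X p) (Y p)"

definition tens :: "(real^'n \<Rightarrow> real^'n^'n) \<Rightarrow> (real^'n \<Rightarrow> real^'n) \<Rightarrow> (real^'n \<Rightarrow> real^'n) \<Rightarrow> real^'n \<Rightarrow> real" where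
  "tens a Y Z p = Y p \<bullet> (a p *v Z p)"

definition cov_tens :: "(real^'n \<Rightarrow> real^'n^'n) \<Rightarrow> (real^'n \<Rightarrow> real^'n^'n) \<Rightarrow> (real^'n \<Rightarrow> real^'n)
     \<Rightarrow> (real^'n \<Rightarrow> real^'n) \<Rightarrow> (real^'n \<Rightarrow> real^'n) \<Rightarrow> real^'n \<Rightarrow> real" where
  "cov_tens g a X Y Z p = frechet_derivative (tens a Y Z) (at p) (X p)
      - tens a (cov g X Y) Z p - tens a Y (cov g X Z) p"

definition codazzi :: "(real^'n) set \<Rightarrow> (real^'n \<Rightarrow> real^'n^'n) \<Rightarrow> (real^'n \<Rightarrow> real^'n^'n) \<Rightarrow> bool" where
  "codazzi D g a \<longleftrightarrow> (\<forall>X Y Z. smooth_on D X \<and> smooth_on D Y \<and> smooth_on D Z \<longrightarrow>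
      (\<forall>p\<in>D. cov_tens g a X Y Z p = cov_tens g a Y X Z p))"

definition esym :: "nat \<Rightarrow> ('n::finite \<Rightarrow> real) \<Rightarrow> real" where
  "esym k lam = (\<Sum>S\<in>{S. card S = k}. \<Prod>i\<in>S. lam i)"

definition charpoly :: "('n::finite \<Rightarrow> real) \<Rightarrow> real poly" where
  "charpoly lam = (\<Prod>i\<in>UNIV. [:- lam i, 1:])"

end

theory Submission
  imports Defs
begin

text \<open>Since sigma_1, ..., sigma_{n-1} are constant, the characteristic polynomial
P_q(x) = prod_j (x - lambda_j(q)) depends on q only through its constant term (-1)^n sigma_n(q).
Differentiating at the root x = lambda_i kills all but one term of the product rule and gives
P'(lambda_i) d lambda_i = (-1)^(n+1) d sigma_n. The Codazzi equation for (e_k, e_i, e_i), combined with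
metric compatibility of the Levi-Civita connection, gives e_k(lambda_i) = (lambda_i - lambda_k) Gamma_ii^k
for i ~= k; together these prove (i). Since Gamma_kk^k = 0, summing (i) over i reduces (ii) to the identity
sum_{i ~= k} 1 / ((lambda_i - lambda_k) P'(lambda_i)) = P''(lambda_k) / (2 P'(lambda_k)^2). Writing
P = (x - lambda_k) Q, the left side is -(1/Q)'(lambda_k) computed from the partial fraction expansion
of 1/Q, while P'(lambda_k) = Q(lambda_k) and P''(lambda_k) = 2 Q'(lambda_k).\<close>

section \<open>Elementary symmetric functions and the characteristic polynomial\<close>

lemma prod_diff_eq_esym_sum:
  fixes lam :: "'n::finite \<Rightarrow> real"
  shows "(\<Prod>j\<in>UNIV. x - lam j) = (\<Sum>k\<le>CARD('n). (-1)^k * esym k lam * x^(CARD('n) - k))"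
proof -
  have "(\<Prod>j\<in>UNIV. x - lam j) = (\<Prod>j\<in>UNIV. - lam j + x)" by simp
  also have "\<dots> = (\<Sum>X\<in>Pow UNIV. (\<Prod>j\<in>X. - lam j) * (\<Prod>_\<in>UNIV - X. x))"
    by (rule prod_add) simp
  also have "\<dots> = (\<Sum>X\<in>Pow UNIV. (-1)^card X * prod lam X * x^(CARD('n) - card X))"
    by (intro sum.cong refl) (simp add: prod_uminus card_Diff_subset)
  also have "\<dots> = (\<Sum>k\<le>CARD('n). \<Sum>X\<in>{X \<in> Pow UNIV. card X = k}.
                      (-1)^card X * prod lam X * x^(CARD('n) - card X))"
    by (rule sum.group[symmetric]) (auto simp: card_mono)
  also have "\<dots> = (\<Sum>k\<le>CARD('n). (-1)^k * esym k lam * x^(CARD('n) - k))"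
    by (intro sum.cong refl)
       (simp add: esym_def sum_distrib_left sum_distrib_right mult_ac)
  finally show ?thesis .
qed

lemma poly_pderiv_charpoly_eigenvalue:
  fixes lam :: "'n::finite \<Rightarrow> real"
  shows "poly (pderiv (charpoly lam)) (lam i) = (\<Prod>l\<in>UNIV-{i}. lam i - lam l)"
proof -
  have "(\<Sum>j\<in>UNIV-{i}. \<Prod>l\<in>UNIV-{j}. lam i - lam l) = 0"
    by (rule sum.neutral) (auto intro: prod_zero)
  then show ?thesis
    by (simp add: charpoly_def pderiv_prod poly_sum poly_prod pderiv_pCons sum.remove[of UNIV i])
qed

lemma pderiv_charpoly_eigenvalue_nonzero:
  fixes lam :: "'n::finite \<Rightarrow> real"
  assumes "inj lam"
  shows "poly (pderiv (charpoly lam)) (lam i) \<noteq> 0"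
  using assms by (auto simp: poly_pderiv_charpoly_eigenvalue prod_zero_iff dest: injD)

lemma lagrange_basis_sum_eq_1:
  fixes r :: "'a \<Rightarrow> real"
  assumes fin: "finite R" and ne: "R \<noteq> {}" and inj: "inj_on r R"
  shows "(\<Sum>i\<in>R. (\<Prod>l\<in>R-{i}. x - r l) / (\<Prod>l\<in>R-{i}. r i - r l)) = 1"
proof -
  define H where "H = (\<Sum>i\<in>R. smult (1 / (\<Prod>l\<in>R-{i}. r i - r l)) (\<Prod>l\<in>R-{i}. [:- r l, 1:])) - 1"
  have poly_H: "poly H y = (\<Sum>i\<in>R. (\<Prod>l\<in>R-{i}. y - r l) / (\<Prod>l\<in>R-{i}. r i - r l)) - 1" for y
    by (simp add: H_def poly_sum poly_prod)
  have "degree (smult (1 / (\<Prod>l\<in>R-{i}. r i - r l)) (\<Prod>l\<in>R-{i}. [:- r l, 1:])) \<le> card R - 1"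
    if "i \<in> R" for i
  proof -
    have "degree (\<Prod>l\<in>R-{i}. [:- r l, 1:]) \<le> (\<Sum>l\<in>R-{i}. degree [:- r l, 1::real:])"
      using degree_prod_sum_le[of "R-{i}" "\<lambda>l. [:- r l, 1:]"] fin by (simp add: o_def)
    also have "\<dots> = card R - 1" using that fin by simp
    finally show ?thesis using degree_smult_le order_trans by blast
  qed
  then have "degree (H + 1) \<le> card R - 1"
    unfolding H_def by (auto intro: degree_sum_le simp: fin)
  then have "degree H \<le> card R - 1"
    using degree_diff_le[of "H + 1" "card R - 1" 1] by simp
  then have deg_H: "degree H < card R"
    using fin ne card_gt_0_iff[of R] by linarith
  have root_H: "poly H (r j) = 0" if "j \<in> R" for j
  proof -
    have "(\<Prod>l\<in>R-{i}. r j - r l) = 0" if "i \<in> R - {j}" for i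
      by (rule prod_zero) (use fin that \<open>j \<in> R\<close> in auto)
    then have "(\<Sum>i\<in>R-{j}. (\<Prod>l\<in>R-{i}. r j - r l) / (\<Prod>l\<in>R-{i}. r i - r l)) = 0"
      by simp
    moreover have "(\<Prod>l\<in>R-{j}. r j - r l) \<noteq> 0"
      using fin inj that by (auto simp: prod_zero_iff inj_on_def)
    ultimately show ?thesis
      using fin that by (simp add: poly_H sum.remove)
  qed
  have "H = 0"
  proof (rule ccontr)
    assume "H \<noteq> 0"
    have "card (r ` R) \<le> card {x. poly H x = 0}"
      by (rule card_mono) (use poly_roots_finite[OF \<open>H \<noteq> 0\<close>] root_H in auto)
    also have "\<dots> \<le> degree H" by (rule card_poly_roots_bound[OF \<open>H \<noteq> 0\<close>])
    finally show False using deg_H card_image[OF inj] by simp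
  qed
  then show ?thesis using poly_H[of x] by simp
qed

lemma inverse_prod_partial_fractions:
  fixes r :: "'a \<Rightarrow> real"
  assumes fin: "finite R" and ne: "R \<noteq> {}" and inj: "inj_on r R" and y: "y \<notin> r ` R"
  shows "inverse (\<Prod>l\<in>R. y - r l) = (\<Sum>i\<in>R. inverse (\<Prod>l\<in>R-{i}. r i - r l) * inverse (y - r i))"
proof -
  have y_ne: "y - r i \<noteq> 0" if "i \<in> R" for i using y that by auto
  then have prod_ne: "(\<Prod>l\<in>R. y - r l) \<noteq> 0" using fin by simp
  have "(\<Prod>l\<in>R-{i}. y - r l) = (\<Prod>l\<in>R. y - r l) * inverse (y - r i)" if "i \<in> R" for i
    using fin that y_ne[OF that] by (simp add: prod.remove field_simps)
  then have "1 = (\<Prod>l\<in>R. y - r l) * (\<Sum>i\<in>R. inverse (\<Prod>l\<in>R-{i}. r i - r l) * inverse (y - r i))"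
    using lagrange_basis_sum_eq_1[OF fin ne inj, of y]
    by (simp add: sum_distrib_left divide_inverse mult_ac cong: sum.cong)
  then show ?thesis using prod_ne by (simp add: field_simps)
qed

lemma sum_inverse_sq_partial_fractions:
  fixes r :: "'a \<Rightarrow> real"
  assumes fin: "finite R" and inj: "inj_on r R" and c: "c \<notin> r ` R"
  shows "(\<Sum>i\<in>R. 1 / ((r i - c)^2 * (\<Prod>l\<in>R-{i}. r i - r l)))
       = poly (pderiv (\<Prod>l\<in>R. [:- r l, 1:])) c / (poly (\<Prod>l\<in>R. [:- r l, 1:]) c)^2"
proof (cases "R = {}")
  case True then show ?thesis by simp
next
  case ne: False
  define Q where "Q = (\<Prod>l\<in>R. [:- r l, 1:])"
  define w where "w i = (\<Prod>l\<in>R-{i}. r i - r l)" for i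
  define S where "S = - (r ` R)"
  have S: "open S" "c \<in> S" using fin c by (auto simp: S_def intro!: open_Compl finite_imp_closed)
  have poly_Q: "poly Q y = (\<Prod>l\<in>R. y - r l)" for y by (simp add: Q_def poly_prod)
  have Q_ne: "poly Q c \<noteq> 0" using fin c by (auto simp: poly_Q prod_zero_iff)
  have "((\<lambda>y. inverse (poly Q y)) has_field_derivative - (poly (pderiv Q) c * inverse (poly Q c ^ 2))) (at c)"
    using DERIV_inverse_fun[OF poly_DERIV[of Q c] Q_ne] by (simp add: power2_eq_square)
  then have "((\<lambda>y. \<Sum>i\<in>R. inverse (w i) * inverse (y - r i)) has_field_derivative
      - (poly (pderiv Q) c * inverse (poly Q c ^ 2))) (at c)"
    unfolding has_field_derivative_def
    by (rule has_derivative_transform_within_open[OF _ S])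
       (simp add: S_def poly_Q w_def inverse_prod_partial_fractions[OF fin ne inj])
  moreover have "((\<lambda>y. \<Sum>i\<in>R. inverse (w i) * inverse (y - r i)) has_field_derivative
       (\<Sum>i\<in>R. inverse (w i) * (- inverse ((c - r i)^2)))) (at c)"
  proof (rule DERIV_sum, rule DERIV_cmult)
    fix i assume "i \<in> R"
    then have "c - r i \<noteq> 0" using c by auto
    then show "((\<lambda>y. inverse (y - r i)) has_field_derivative - inverse ((c - r i)^2)) (at c)"
      using DERIV_inverse_fun[OF DERIV_diff[OF DERIV_ident DERIV_const]]
      by (simp add: power2_eq_square)
  qed
  ultimately have "- (poly (pderiv Q) c * inverse (poly Q c ^ 2))
      = (\<Sum>i\<in>R. inverse (w i) * (- inverse ((c - r i)^2)))"
    by (rule DERIV_unique)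
  then show ?thesis
    by (simp add: Q_def w_def sum_negf divide_inverse mult_ac power2_commute)
qed

lemma sum_inverse_pderiv_charpoly:
  fixes lam :: "'n::finite \<Rightarrow> real"
  assumes inj: "inj lam"
  shows "(\<Sum>i\<in>UNIV-{k}. 1 / ((lam i - lam k) * poly (pderiv (charpoly lam)) (lam i)))
    = poly (pderiv (pderiv (charpoly lam))) (lam k) / (2 * (poly (pderiv (charpoly lam)) (lam k))^2)"
proof -
  define R where "R = UNIV - {k}"
  define Q where "Q = (\<Prod>l\<in>R. [:- lam l, 1:])"
  have P: "charpoly lam = [:- lam k, 1:] * Q"
    unfolding charpoly_def Q_def R_def by (simp add: prod.remove[of UNIV k])
  have linear_factor: "pderiv [:- lam k, 1::real:] = 1" by (simp add: pderiv_pCons)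
  have d1: "pderiv (charpoly lam) = Q + [:- lam k, 1:] * pderiv Q"
    unfolding P pderiv_mult linear_factor by (simp only: mult_1_right mult_1_left add.commute)
  have d2: "pderiv (pderiv (charpoly lam)) = 2 * pderiv Q + [:- lam k, 1:] * pderiv (pderiv Q)"
    unfolding d1 pderiv_add pderiv_mult linear_factor by (simp only: mult_1_right mult_1_left mult_2 add_ac)
  have "(lam i - lam k) * poly (pderiv (charpoly lam)) (lam i)
      = (lam i - lam k)^2 * (\<Prod>l\<in>R-{i}. lam i - lam l)" if "i \<in> R" for i
  proof -
    have "UNIV - {i} = insert k (R - {i})" and "k \<notin> R - {i}" using that by (auto simp: R_def)
    then show ?thesis by (simp add: poly_pderiv_charpoly_eigenvalue power2_eq_square)
  qed
  then have "(\<Sum>i\<in>UNIV-{k}. 1 / ((lam i - lam k) * poly (pderiv (charpoly lam)) (lam i)))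
      = (\<Sum>i\<in>R. 1 / ((lam i - lam k)^2 * (\<Prod>l\<in>R-{i}. lam i - lam l)))"
    by (simp add: R_def)
  also have "\<dots> = poly (pderiv Q) (lam k) / (poly Q (lam k))^2"
    unfolding Q_def
    by (rule sum_inverse_sq_partial_fractions) (use inj in \<open>auto simp: R_def inj_on_def inj_def\<close>)
  also have "\<dots> = poly (pderiv (pderiv (charpoly lam))) (lam k) / (2 * (poly (pderiv (charpoly lam)) (lam k))^2)"
  proof -
    have "poly (pderiv (charpoly lam)) (lam k) = poly Q (lam k)" unfolding d1 by simp
    moreover have "poly (pderiv (pderiv (charpoly lam))) (lam k) = 2 * poly (pderiv Q) (lam k)"
      unfolding d2 by simp
    ultimately show ?thesis by simp
  qed
  finally show ?thesis .
qed

lemma has_derivative_esym_top: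
  fixes lam :: "'n::finite \<Rightarrow> 'a::real_normed_vector \<Rightarrow> real"
  assumes "open D" "p \<in> D"
    and lam': "\<And>j. (lam j has_derivative lam' j) (at p)"
    and esym_const: "\<And>k. k \<noteq> CARD('n) \<Longrightarrow> \<exists>c. \<forall>q\<in>D. esym k (\<lambda>j. lam j q) = c"
  shows "((\<lambda>q. esym CARD('n) (\<lambda>j. lam j q)) has_derivative
      (\<lambda>v. (-1)^(CARD('n) + 1) * poly (pderiv (charpoly (\<lambda>j. lam j p))) (lam i p) * lam' i v)) (at p)"
proof -
  define n where "n = CARD('n)"
  define x where "x = lam i p"
  obtain c where c: "\<And>k q. k \<noteq> n \<Longrightarrow> q \<in> D \<Longrightarrow> esym k (\<lambda>j. lam j q) = c k"
    using esym_const unfolding n_def by metis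
  define K where "K = (\<Sum>k<n. (-1)^k * c k * x^(n-k))"
  have sign: "(-1::real)^n * (-1)^n = 1" by (simp flip: power_add)
  have esym_eq: "esym n (\<lambda>j. lam j q) = (-1)^n * ((\<Prod>j\<in>UNIV. x - lam j q) - K)" if "q \<in> D" for q
    using prod_diff_eq_esym_sum[of x "\<lambda>j. lam j q"] c[OF _ that] sign
    by (simp add: K_def n_def[symmetric] lessThan_Suc_atMost[symmetric] algebra_simps)
  have "((\<lambda>q. \<Prod>j\<in>UNIV. x - lam j q) has_derivative
      (\<lambda>v. \<Sum>j\<in>UNIV. - lam' j v * (\<Prod>l\<in>UNIV-{j}. x - lam l p))) (at p)"
    using has_derivative_prod[of UNIV "\<lambda>j q. x - lam j q" "\<lambda>j v. 0 - lam' j v" p UNIV]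
      has_derivative_diff[OF has_derivative_const lam'] by simp
  moreover have "(\<Sum>j\<in>UNIV. - lam' j v * (\<Prod>l\<in>UNIV-{j}. x - lam l p))
      = - poly (pderiv (charpoly (\<lambda>j. lam j p))) x * lam' i v" for v
  proof -
    have "(\<Sum>j\<in>UNIV-{i}. - lam' j v * (\<Prod>l\<in>UNIV-{j}. x - lam l p)) = 0"
      by (intro sum.neutral ballI) (auto intro!: prod_zero simp: x_def)
    then show ?thesis
      by (simp add: sum.remove[of UNIV i] x_def poly_pderiv_charpoly_eigenvalue[of "\<lambda>j. lam j p" i])
  qed
  ultimately have "((\<lambda>q. \<Prod>j\<in>UNIV. x - lam j q) has_derivative
      (\<lambda>v. - poly (pderiv (charpoly (\<lambda>j. lam j p))) x * lam' i v)) (at p)"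
    by simp
  then have "((\<lambda>q. (-1)^n * ((\<Prod>j\<in>UNIV. x - lam j q) - K)) has_derivative
      (\<lambda>v. (-1)^n * (- poly (pderiv (charpoly (\<lambda>j. lam j p))) x * lam' i v - 0))) (at p)"
    by (intro has_derivative_mult_right has_derivative_diff has_derivative_const)
  then have "((\<lambda>q. esym n (\<lambda>j. lam j q)) has_derivative
      (\<lambda>v. (-1)^n * (- poly (pderiv (charpoly (\<lambda>j. lam j p))) x * lam' i v - 0))) (at p)"
    by (rule has_derivative_transform_within_open[OF _ assms(1,2)]) (simp add: esym_eq)
  then show ?thesis
    unfolding n_def x_def by (rule has_derivative_eq_rhs) (simp add: fun_eq_iff)
qed

section \<open>The Levi-Civita connection in coordinates\<close>

lemma bounded_bilinear_matrix_vector_mult: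
  "bounded_bilinear (\<lambda>(M::real^'n^'m) (z::real^'n). M *v z)"
  unfolding bilinear_conv_bounded_bilinear[symmetric] bilinear_def
proof (intro allI conjI)
  fix z :: "real^'n" and M :: "real^'n^'m"
  show "linear (\<lambda>M::real^'n^'m. M *v z)"
    by (rule linearI) (simp_all add: scaleR_matrix_vector_assoc[symmetric] matrix_vector_mult_add_rdistrib)
  show "linear (\<lambda>z. M *v z)" by (rule matrix_vector_mul_linear)
qed

lemma has_derivative_inner_matrix_vector:
  fixes Y :: "'a::real_normed_vector \<Rightarrow> real^'m" and M :: "'a \<Rightarrow> real^'n^'m"
    and Z :: "'a \<Rightarrow> real^'n"
  assumes "(Y has_derivative Y') (at p)" "(M has_derivative M') (at p)" "(Z has_derivative Z') (at p)"
  shows "((\<lambda>q. Y q \<bullet> (M q *v Z q)) has_derivative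
     (\<lambda>v. Y' v \<bullet> (M p *v Z p) + Y p \<bullet> (M' v *v Z p) + Y p \<bullet> (M p *v Z' v))) (at p)"
  using has_derivative_inner[OF assms(1)
      bounded_bilinear.FDERIV[OF bounded_bilinear_matrix_vector_mult assms(2,3)]]
  by (rule has_derivative_eq_rhs) (simp add: fun_eq_iff inner_add_right)

lemma symmetric_matrix_inner_commute:
  fixes G :: "real^'n^'n"
  assumes "transpose G = G"
  shows "x \<bullet> (G *v y) = y \<bullet> (G *v x)"
  by (metis assms dot_lmul_matrix inner_commute transpose_matrix_vector)

lemma pos_def_matrix_inv_right:
  fixes G :: "real^'n^'n"
  assumes "\<forall>v. v \<noteq> 0 \<longrightarrow> v \<bullet> (G *v v) > 0"
  shows "G *v (matrix_inv G *v w) = w"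
proof -
  have "\<forall>x. G *v x = 0 \<longrightarrow> x = 0"
    using assms by (metis inner_zero_right less_irrefl)
  then have "invertible G"
    using matrix_left_invertible_ker invertible_left_inverse by blast
  then have "G ** matrix_inv G = mat 1"
    unfolding invertible_def matrix_inv_def
    by (rule someI_ex[where P="\<lambda>A'. G ** A' = mat 1 \<and> A' ** G = mat 1", THEN conjunct1])
  then show ?thesis by (simp add: matrix_vector_mul_assoc)
qed

lemma orthonormal_frame_orthogonal_imp_eq_0:
  fixes G :: "real^'n^'n" and E :: "'n \<Rightarrow> real^'n"
  assumes orthonormal: "\<And>i j. E i \<bullet> (G *v E j) = (if i = j then 1 else 0)"
    and orthogonal: "\<And>j. E j \<bullet> x = 0"
  shows "x = 0"
proof -
  define T where "T c = (\<Sum>j\<in>UNIV. (c $ j) *\<^sub>R E j)" for c :: "real^'n"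
  have "linear T"
    by (rule linearI) (simp_all add: T_def scaleR_add_left sum.distrib scaleR_sum_right)
  moreover have "T c \<bullet> (G *v E k) = c $ k" for c k
    by (simp add: T_def inner_sum_left orthonormal if_distrib cong: if_cong)
  then have "inj T" by (metis injI vec_eq_iff)
  ultimately have "surj T" using eucl.linear_injective_imp_surjective by blast
  then obtain c where c: "x = T c" by (metis surjD)
  have "x \<bullet> x = (\<Sum>j\<in>UNIV. c $ j * (E j \<bullet> x))"
    by (simp add: c T_def inner_sum_left)
  then show ?thesis by (simp add: orthogonal)
qed

lemma orthonormal_frame_diagonal_eigenvector:
  fixes G A :: "real^'n^'n" and E :: "'n \<Rightarrow> real^'n"
  assumes orthonormal: "\<And>i j. E i \<bullet> (G *v E j) = (if i = j then 1 else 0)"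
    and diagonal: "\<And>j. E j \<bullet> (A *v E i) = (if j = i then \<mu> else 0)"
  shows "A *v E i = \<mu> *\<^sub>R (G *v E i)"
proof -
  have "A *v E i - \<mu> *\<^sub>R (G *v E i) = 0"
    by (rule orthonormal_frame_orthogonal_imp_eq_0[OF orthonormal])
       (simp add: inner_diff_right orthonormal diagonal)
  then show ?thesis by simp
qed

text \<open>Pairing the Koszul vector w(u,y) with z and w(u,z) with y, the terms with d_y g and d_z g
cancel by symmetry of the derivative of the metric, leaving 2 (d_u g)(y,z).\<close>

lemma christoffel_metric_compatible:
  fixes g :: "real^'n \<Rightarrow> real^'n^'n"
  assumes sym: "transpose (g p) = g p" and pos_def: "\<forall>v. v \<noteq> 0 \<longrightarrow> v \<bullet> (g p *v v) > 0"
    and linear_dg: "linear (frechet_derivative g (at p))"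
    and sym_dg: "\<And>u y z. y \<bullet> (frechet_derivative g (at p) u *v z) = z \<bullet> (frechet_derivative g (at p) u *v y)"
  shows "christoffel g p u y \<bullet> (g p *v z) + y \<bullet> (g p *v christoffel g p u z)
       = y \<bullet> (frechet_derivative g (at p) u *v z)"
proof -
  define L where "L = frechet_derivative g (at p)"
  define w where "w u v = (\<chi> l. v \<bullet> (L u *v axis l 1) + u \<bullet> (L v *v axis l 1) - u \<bullet> (L (axis l 1) *v v))"
    for u v :: "real^'n"
  have w_inner: "w u v \<bullet> z = v \<bullet> (L u *v z) + u \<bullet> (L v *v z) - u \<bullet> (L z *v v)" for u v z
  proof -
    define \<phi> where "\<phi> x = v \<bullet> (L u *v x) + u \<bullet> (L v *v x) - u \<bullet> (L x *v v)" for x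
    have "linear L" using linear_dg by (simp add: L_def)
    then have "linear \<phi>"
      by (intro linearI)
         (simp_all add: \<phi>_def linear_add linear_scale matrix_vector_mult_add_rdistrib
            scaleR_matrix_vector_assoc[symmetric] vec.add matrix_vector_mult_scaleR algebra_simps)
    then have "\<phi> z = \<phi> (\<Sum>l\<in>UNIV. z $ l *\<^sub>R axis l 1)"
      using basis_expansion[of z] by (simp add: scalar_mult_eq_scaleR)
    also have "\<dots> = (\<Sum>l\<in>UNIV. z $ l * \<phi> (axis l 1))"
      using \<open>linear \<phi>\<close> by (simp add: linear_sum linear_scale)
    finally have "\<phi> z = (\<Sum>l\<in>UNIV. z $ l * \<phi> (axis l 1))" .
    then show ?thesis by (simp add: w_def \<phi>_def inner_vec_def mult.commute)
  qed
  have christoffel_w: "christoffel g p u v = (1/2) *\<^sub>R (matrix_inv (g p) *v w u v)" for u v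
    by (simp add: christoffel_def w_def L_def)
  have "christoffel g p u y \<bullet> (g p *v z) = (1/2) * (w u y \<bullet> z)"
    unfolding christoffel_w inner_scaleR_left
    by (subst symmetric_matrix_inner_commute[OF sym])
       (simp add: pos_def_matrix_inv_right[OF pos_def] inner_commute)
  moreover have "y \<bullet> (g p *v christoffel g p u z) = (1/2) * (w u z \<bullet> y)"
    unfolding christoffel_w matrix_vector_mult_scaleR inner_scaleR_right
    by (simp add: pos_def_matrix_inv_right[OF pos_def] inner_commute)
  moreover have "z \<bullet> (L u *v y) = y \<bullet> (L u *v z)" using sym_dg by (simp add: L_def)
  ultimately show ?thesis
    unfolding L_def[symmetric] w_inner by (simp add: algebra_simps)
qed

lemma smooth_on_has_derivative:
  assumes "smooth_on D f" "open D" "p \<in> D"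
  shows "(f has_derivative frechet_derivative f (at p)) (at p)"
proof -
  have "dder [] f differentiable_on D" using assms(1) unfolding smooth_on_def by blast
  then have "f differentiable at p"
    using assms(2,3) differentiable_on_eq_differentiable_at by auto
  then show ?thesis by (rule frechet_derivative_works[THEN iffD1])
qed

lemma frechet_derivative_constant_on_open:
  assumes "open D" "p \<in> D" "\<And>q. q \<in> D \<Longrightarrow> f q = c"
  shows "frechet_derivative f (at p) = (\<lambda>_. 0)"
proof -
  have "frechet_derivative (\<lambda>_. c) (at p) = frechet_derivative f (at p)"
    by (rule frechet_derivative_transform_within_open[OF _ assms(1,2)]) (simp_all add: assms(3))
  then show ?thesis by simp
qed

lemma has_derivative_symmetric_matrix_inner_commute:
  fixes M :: "'a::real_normed_vector \<Rightarrow> real^'n^'n"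
  assumes M': "(M has_derivative M') (at p)"
    and "open D" "p \<in> D" and sym: "\<And>q. q \<in> D \<Longrightarrow> transpose (M q) = M q"
  shows "y \<bullet> (M' u *v z) = z \<bullet> (M' u *v y)"
proof -
  have "((\<lambda>q. y \<bullet> (M q *v z) - z \<bullet> (M q *v y)) has_derivative
      (\<lambda>v. (0 \<bullet> (M p *v z) + y \<bullet> (M' v *v z) + y \<bullet> (M p *v 0))
         - (0 \<bullet> (M p *v y) + z \<bullet> (M' v *v y) + z \<bullet> (M p *v 0)))) (at p)"
    by (intro has_derivative_diff has_derivative_inner_matrix_vector has_derivative_const M')
  then have d: "((\<lambda>q. y \<bullet> (M q *v z) - z \<bullet> (M q *v y)) has_derivative
      (\<lambda>v. y \<bullet> (M' v *v z) - z \<bullet> (M' v *v y))) (at p)"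
    by simp
  have "frechet_derivative (\<lambda>q. y \<bullet> (M q *v z) - z \<bullet> (M q *v y)) (at p) = (\<lambda>_. 0)"
    using assms(2,3) by (rule frechet_derivative_constant_on_open)
       (simp add: symmetric_matrix_inner_commute[OF sym])
  then have "(\<lambda>v. y \<bullet> (M' v *v z) - z \<bullet> (M' v *v y)) = (\<lambda>_. 0)"
    using frechet_derivative_at[OF d] by simp
  from fun_cong[OF this, of u] show ?thesis by simp
qed

lemma cov_metric_compatible:
  assumes "open D" "riemannian_metric D g" "p \<in> D"
    and "Y differentiable at p" "Z differentiable at p"
  shows "frechet_derivative (\<lambda>q. ginner g q (Y q) (Z q)) (at p) (X p)
       = ginner g p (cov g X Y p) (Z p) + ginner g p (Y p) (cov g X Z p)"
proof -
  have sym: "\<And>q. q \<in> D \<Longrightarrow> transpose (g q) = g q"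
    and pos_def: "\<forall>v. v \<noteq> 0 \<longrightarrow> v \<bullet> (g p *v v) > 0"
    and dg: "(g has_derivative frechet_derivative g (at p)) (at p)"
    using assms(1-3) smooth_on_has_derivative by (auto simp: riemannian_metric_def)
  have "((\<lambda>q. Y q \<bullet> (g q *v Z q)) has_derivative
      (\<lambda>v. frechet_derivative Y (at p) v \<bullet> (g p *v Z p) + Y p \<bullet> (frechet_derivative g (at p) v *v Z p)
         + Y p \<bullet> (g p *v frechet_derivative Z (at p) v))) (at p)"
    using assms(4,5) dg by (intro has_derivative_inner_matrix_vector) (simp_all add: frechet_derivative_works)
  then have "frechet_derivative (\<lambda>q. ginner g q (Y q) (Z q)) (at p) (X p)
      = frechet_derivative Y (at p) (X p) \<bullet> (g p *v Z p) + Y p \<bullet> (frechet_derivative g (at p) (X p) *v Z p)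
         + Y p \<bullet> (g p *v frechet_derivative Z (at p) (X p))"
    unfolding ginner_def by (simp add: frechet_derivative_at[symmetric])
  moreover have "christoffel g p (X p) (Y p) \<bullet> (g p *v Z p) + Y p \<bullet> (g p *v christoffel g p (X p) (Z p))
      = Y p \<bullet> (frechet_derivative g (at p) (X p) *v Z p)"
    using has_derivative_linear[OF dg]
      has_derivative_symmetric_matrix_inner_commute[OF dg assms(1,3) sym]
    by (intro christoffel_metric_compatible sym assms(3) pos_def)
  moreover have "ginner g p (cov g X Y p) (Z p) + ginner g p (Y p) (cov g X Z p)
      = frechet_derivative Y (at p) (X p) \<bullet> (g p *v Z p) + christoffel g p (X p) (Y p) \<bullet> (g p *v Z p)
        + (Y p \<bullet> (g p *v frechet_derivative Z (at p) (X p)) + Y p \<bullet> (g p *v christoffel g p (X p) (Z p)))"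
    by (simp add: ginner_def cov_def inner_add_left inner_add_right matrix_vector_right_distrib)
  ultimately show ?thesis by linarith
qed

section \<open>Orthonormal eigenframes of a Codazzi tensor\<close>

locale codazzi_eigenframe =
  fixes D :: "(real^'n) set" and g :: "real^'n \<Rightarrow> real^'n^'n" and e :: "'n \<Rightarrow> real^'n \<Rightarrow> real^'n"
    and a :: "real^'n \<Rightarrow> real^'n^'n" and lam :: "'n \<Rightarrow> real^'n \<Rightarrow> real"
  assumes open_D: "open D"
    and metric: "riemannian_metric D g"
    and frame_smooth: "\<And>i. smooth_on D (e i)"
    and frame_orthonormal: "\<And>i j p. p \<in> D \<Longrightarrow> ginner g p (e i p) (e j p) = (if i = j then 1 else 0)"
    and a_smooth: "smooth_on D a"
    and a_symmetric: "\<And>p. p \<in> D \<Longrightarrow> transpose (a p) = a p"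
    and a_codazzi: "codazzi D g a"
    and a_diagonal: "\<And>i j p. p \<in> D \<Longrightarrow> tens a (e i) (e j) p = (if i = j then lam i p else 0)"
begin

abbreviation Gamma :: "'n \<Rightarrow> 'n \<Rightarrow> 'n \<Rightarrow> real^'n \<Rightarrow> real" where
  "Gamma i j k p \<equiv> ginner g p (cov g (e i) (e j) p) (e k p)"

lemma ginner_commute: "p \<in> D \<Longrightarrow> ginner g p x y = ginner g p y x"
  using metric by (simp add: riemannian_metric_def ginner_def symmetric_matrix_inner_commute)

lemma frame_differentiable: "p \<in> D \<Longrightarrow> e i differentiable at p"
  using smooth_on_has_derivative[OF frame_smooth open_D] by (auto simp: differentiable_def)

lemma Gamma_antisym:
  assumes "p \<in> D"
  shows "Gamma k i j p = - Gamma k j i p"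
proof -
  have "frechet_derivative (\<lambda>q. ginner g q (e i q) (e j q)) (at p) = (\<lambda>_. 0)"
    using open_D assms by (rule frechet_derivative_constant_on_open) (rule frame_orthonormal)
  then have "Gamma k i j p + ginner g p (e i p) (cov g (e k) (e j) p) = 0"
    using cov_metric_compatible[OF open_D metric assms frame_differentiable[OF assms, of i]
        frame_differentiable[OF assms, of j], where X = "e k"]
    by simp
  then show ?thesis using ginner_commute[OF assms] by simp
qed

lemma Gamma_diag: "p \<in> D \<Longrightarrow> Gamma k i i p = 0"
  using Gamma_antisym[of p k i i] by simp

lemma tens_frame_right:
  assumes "p \<in> D"
  shows "tens a Y (e i) p = lam i p * ginner g p (Y p) (e i p)"
proof -
  have "a p *v e i p = lam i p *\<^sub>R (g p *v e i p)"
    using frame_orthonormal[OF assms] a_diagonal[OF assms]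
    by (intro orthonormal_frame_diagonal_eigenvector) (simp_all add: ginner_def tens_def)
  then show ?thesis by (simp add: tens_def ginner_def)
qed

lemma tens_frame_left:
  assumes "p \<in> D"
  shows "tens a (e k) Y p = lam k p * ginner g p (e k p) (Y p)"
  using tens_frame_right[OF assms, of Y k] symmetric_matrix_inner_commute[OF a_symmetric[OF assms]]
    ginner_commute[OF assms] by (simp add: tens_def)

lemma tens_frame_differentiable:
  assumes "p \<in> D"
  shows "tens a (e i) (e j) differentiable at p"
  unfolding tens_def[abs_def] differentiable_def
  using has_derivative_inner_matrix_vector
    smooth_on_has_derivative[OF frame_smooth open_D assms]
    smooth_on_has_derivative[OF a_smooth open_D assms] by blast

lemma frechet_derivative_tens_frame_diag:
  assumes "p \<in> D"
  shows "frechet_derivative (tens a (e i) (e i)) (at p) = frechet_derivative (lam i) (at p)"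
  by (rule frechet_derivative_transform_within_open[OF tens_frame_differentiable[OF assms] open_D assms])
     (simp_all add: a_diagonal)

lemma lam_has_derivative:
  assumes "p \<in> D"
  shows "(lam i has_derivative frechet_derivative (lam i) (at p)) (at p)"
proof -
  have "(lam i has_derivative frechet_derivative (tens a (e i) (e i)) (at p)) (at p)"
    by (rule has_derivative_transform_within_open[OF
          frechet_derivative_works[THEN iffD1, OF tens_frame_differentiable[OF assms]] open_D assms])
       (simp add: a_diagonal)
  then show ?thesis using frechet_derivative_tens_frame_diag[OF assms] by simp
qed

lemma frechet_derivative_lam_codazzi:
  assumes "p \<in> D" "i \<noteq> k"
  shows "frechet_derivative (lam i) (at p) (e k p) = (lam i p - lam k p) * Gamma i i k p"
proof -
  have "cov_tens g a (e k) (e i) (e i) p = cov_tens g a (e i) (e k) (e i) p"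
    using a_codazzi frame_smooth assms(1) unfolding codazzi_def by blast
  moreover note frechet_derivative_tens_frame_diag[OF assms(1)]
  moreover have "frechet_derivative (tens a (e k) (e i)) (at p) = (\<lambda>_. 0)"
    using open_D assms by (intro frechet_derivative_constant_on_open) (auto simp: a_diagonal)
  ultimately have "frechet_derivative (lam i) (at p) (e k p)
      = lam i p * (Gamma k i i p + ginner g p (e i p) (cov g (e k) (e i) p))
        - lam i p * Gamma i k i p - lam k p * ginner g p (e k p) (cov g (e i) (e i) p)"
    using assms(1) by (simp add: cov_tens_def tens_frame_right tens_frame_left algebra_simps)
  moreover have "ginner g p (e i p) (cov g (e k) (e i) p) = 0" "Gamma k i i p = 0"
      "ginner g p (e k p) (cov g (e i) (e i) p) = Gamma i i k p"
    using Gamma_diag[OF assms(1)] ginner_commute[OF assms(1)] by metis+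
  moreover have "Gamma i k i p = - Gamma i i k p"
    by (rule Gamma_antisym[OF assms(1)])
  ultimately show ?thesis by (simp add: algebra_simps)
qed

end

locale codazzi_eigenframe_const_esym = codazzi_eigenframe D g e a lam
  for D :: "(real^'n) set" and g e a and lam :: "'n \<Rightarrow> real^'n \<Rightarrow> real" +
  assumes lam_distinct: "\<And>p. p \<in> D \<Longrightarrow> inj (\<lambda>i. lam i p)"
    and esym_const: "\<And>k. k \<noteq> CARD('n) \<Longrightarrow> \<exists>c. \<forall>p\<in>D. esym k (\<lambda>i. lam i p) = c"
begin

abbreviation sigma_n :: "real^'n \<Rightarrow> real" where
  "sigma_n q \<equiv> esym CARD('n) (\<lambda>j. lam j q)"

lemma frechet_derivative_sigma_n:
  assumes "p \<in> D"
  shows "frechet_derivative sigma_n (at p) v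
       = (-1)^(CARD('n) + 1) * poly (pderiv (charpoly (\<lambda>j. lam j p))) (lam i p)
         * frechet_derivative (lam i) (at p) v"
proof -
  have "(\<lambda>v. (-1)^(CARD('n) + 1) * poly (pderiv (charpoly (\<lambda>j. lam j p))) (lam i p)
         * frechet_derivative (lam i) (at p) v) = frechet_derivative sigma_n (at p)"
    by (rule frechet_derivative_at[OF has_derivative_esym_top[OF open_D assms lam_has_derivative[OF assms] esym_const]])
  from fun_cong[OF this[symmetric]] show ?thesis .
qed

lemma Gamma_iik_eq:
  assumes "p \<in> D" "i \<noteq> k"
  shows "Gamma i i k p = (-1)^(CARD('n) + 1)
      / ((lam i p - lam k p) * poly (pderiv (charpoly (\<lambda>j. lam j p))) (lam i p))
      * frechet_derivative sigma_n (at p) (e k p)"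
proof -
  define s :: real where "s = (-1)^(CARD('n) + 1)"
  define P' where "P' = poly (pderiv (charpoly (\<lambda>j. lam j p))) (lam i p)"
  have s_sq: "s * s = 1" unfolding s_def by (simp flip: power_add)
  have "lam i p - lam k p \<noteq> 0"
    using lam_distinct[OF assms(1)] assms(2) by (auto dest: injD)
  moreover have "P' \<noteq> 0"
    unfolding P'_def by (rule pderiv_charpoly_eigenvalue_nonzero[OF lam_distinct[OF assms(1)]])
  ultimately have "s / ((lam i p - lam k p) * P') * (s * P' * ((lam i p - lam k p) * Gamma i i k p))
      = (s * s) * Gamma i i k p"
    by (simp add: field_simps)
  moreover have "frechet_derivative sigma_n (at p) (e k p) = s * P' * ((lam i p - lam k p) * Gamma i i k p)"
    using frechet_derivative_sigma_n[OF assms(1), of "e k p" i] frechet_derivative_lam_codazzi[OF assms]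
    by (simp add: s_def P'_def)
  ultimately show ?thesis
    unfolding s_def[symmetric] P'_def[symmetric] s_sq by simp
qed

lemma inner_sum_cov_frame_grad_sigma_n:
  assumes "p \<in> D"
  shows "ginner g p (\<Sum>i\<in>UNIV. cov g (e i) (e i) p)
           (\<Sum>k\<in>UNIV. frechet_derivative sigma_n (at p) (e k p) *\<^sub>R e k p)
       = (\<Sum>k\<in>UNIV. (-1)^(CARD('n) + 1)
           * poly (pderiv (pderiv (charpoly (\<lambda>j. lam j p)))) (lam k p)
           / (2 * (poly (pderiv (charpoly (\<lambda>j. lam j p))) (lam k p))^2)
           * (frechet_derivative sigma_n (at p) (e k p))^2)"
proof -
  define ds where "ds k = frechet_derivative sigma_n (at p) (e k p)" for k
  define P where "P = charpoly (\<lambda>j. lam j p)"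
  have "(\<Sum>i\<in>UNIV. Gamma i i k p)
      = (-1)^(CARD('n) + 1) * poly (pderiv (pderiv P)) (lam k p) / (2 * (poly (pderiv P) (lam k p))^2) * ds k"
    for k
  proof -
    have "(\<Sum>i\<in>UNIV. Gamma i i k p) = (\<Sum>i\<in>UNIV-{k}. Gamma i i k p)"
      using Gamma_diag[OF assms, of k k] by (simp add: sum.remove[of UNIV k])
    also have "\<dots> = (-1)^(CARD('n) + 1) * ds k
        * (\<Sum>i\<in>UNIV-{k}. 1 / ((lam i p - lam k p) * poly (pderiv P) (lam i p)))"
      by (simp add: sum_distrib_left Gamma_iik_eq[OF assms] ds_def P_def)
    finally show ?thesis
      using sum_inverse_pderiv_charpoly[OF lam_distinct[OF assms], of k] by (simp add: P_def)
  qed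
  moreover have "ginner g p (\<Sum>i\<in>UNIV. cov g (e i) (e i) p) (\<Sum>k\<in>UNIV. ds k *\<^sub>R e k p)
      = (\<Sum>k\<in>UNIV. ds k * (\<Sum>i\<in>UNIV. Gamma i i k p))"
    by (simp add: ginner_def inner_sum_left inner_sum_right matrix_vector_mult_scaleR
        linear_sum[OF matrix_vector_mul_linear] o_def sum_distrib_left mult.commute)
  ultimately show ?thesis
    by (simp add: ds_def P_def power2_eq_square mult_ac)
qed

end

theorem lemma4p3:
  fixes D :: "(real^'n) set"
    and g :: "real^'n \<Rightarrow> real^'n^'n"
    and e :: "'n \<Rightarrow> real^'n \<Rightarrow> real^'n"
    and a :: "real^'n \<Rightarrow> real^'n^'n"
    and lam :: "'n \<Rightarrow> real^'n \<Rightarrow> real"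
  assumes "open D"
    and "riemannian_metric D g"
    and "\<And>i. smooth_on D (e i)"
    and "\<And>i j p. p \<in> D \<Longrightarrow> ginner g p (e i p) (e j p) = (if i = j then 1 else 0)"
    and "smooth_on D a"
    and "\<And>p. p \<in> D \<Longrightarrow> transpose (a p) = a p"
    and "codazzi D g a"
    and "\<And>i j p. p \<in> D \<Longrightarrow> tens a (e i) (e j) p = (if i = j then lam i p else 0)"
    and "\<And>p. p \<in> D \<Longrightarrow> inj (\<lambda>i. lam i p)"
    and "\<And>k. k \<noteq> CARD('n) \<Longrightarrow> \<exists>c. \<forall>p\<in>D. esym k (\<lambda>i. lam i p) = c"
  shows "(\<forall>p\<in>D. \<forall>i k. i \<noteq> k \<longrightarrow>
           ginner g p (cov g (e i) (e i) p) (e k p)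
           = (-1) ^ (CARD('n) + 1)
               / ((lam i p - lam k p) * poly (pderiv (charpoly (\<lambda>j. lam j p))) (lam i p))
             * frechet_derivative (\<lambda>q. esym CARD('n) (\<lambda>j. lam j q)) (at p) (e k p))
     \<and> (\<forall>p\<in>D.
           ginner g p (\<Sum>i\<in>UNIV. cov g (e i) (e i) p)
             (\<Sum>k\<in>UNIV. frechet_derivative (\<lambda>q. esym CARD('n) (\<lambda>j. lam j q)) (at p) (e k p) *\<^sub>R e k p)
           = (\<Sum>k\<in>UNIV. (-1) ^ (CARD('n) + 1)
                 * poly (pderiv (pderiv (charpoly (\<lambda>j. lam j p)))) (lam k p)
                 / (2 * (poly (pderiv (charpoly (\<lambda>j. lam j p))) (lam k p))^2)
                 * (frechet_derivative (\<lambda>q. esym CARD('n) (\<lambda>j. lam j q)) (at p) (e k p))^2))"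
proof -
  interpret codazzi_eigenframe_const_esym D g e a lam
    by unfold_locales (fact assms)+
  show ?thesis
    using Gamma_iik_eq inner_sum_cov_frame_grad_sigma_n by blast
qed

end
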